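(* In an instance of the Profile Matching Problem (defined in the context), if the distances $d(x,y)$ of a given participant $x$ to all members $y$ of the opposite sex are pairwise distinct, then $x$ has a unique stable partner.
   Context: Profile Matching Problem: a set $\mathcal{M}$ of $n$ men and a set $\mathcal{W}$ of $n$ women; each participant $x$ has a profile $\mathbf{a}(x)\in Q_k=\{0,1\}^k$. The distance $d$ on $Q_k$ is either the Hamming distance $d_h(\mathbf{a},\mathbf{a}')=\sum_{i=1}^k\mathbf{1}(a_i\ne a_i')$ or the Weighted Hamming distance $d_w(\mathbf{a},\mathbf{a}')=\sum_{i=1}^k2^{-i}\mathbf{1}(a_i\ne a_i')$; $d(x,y)=d(\mathbf{a}(x),\mathbf{a}(y))$. Each participant $x$ has a tie-breaking list $T_x$ (a strict order on the opposite sex); the strict preference list of $x$ ranks the opposite sex in increasing order of $d(x,\cdot)$, ties broken by $T_x$. Stable matchings are in the sense of Gale and Shapley; $y$ is a stable partner of $x$ if they are matched in some stable matching. *)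

theory Defs
  imports Complex_Main
begin

text \<open>A profile a(x) in Q_k is a function nat => bool, of which only the coordinates
1..k are relevant. The tie-breaking list T_x is a rank function T x, injective on the
opposite sex (smaller rank = more preferred).\<close>

definition hamming :: "nat \<Rightarrow> (nat \<Rightarrow> bool) \<Rightarrow> (nat \<Rightarrow> bool) \<Rightarrow> real" where
  "hamming k a b = real (card {i \<in> {1..k}. a i \<noteq> b i})"

definition whamming :: "nat \<Rightarrow> (nat \<Rightarrow> bool) \<Rightarrow> (nat \<Rightarrow> bool) \<Rightarrow> real" where
  "whamming k a b = (\<Sum>i\<in>{1..k}. if a i \<noteq> b i then (1/2) ^ i else 0)"

definition opp :: "'p set \<Rightarrow> 'p set \<Rightarrow> 'p \<Rightarrow> 'p set" where
  "opp M W x = (if x \<in> M then W else M)"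

definition prefers :: "((nat \<Rightarrow> bool) \<Rightarrow> (nat \<Rightarrow> bool) \<Rightarrow> real) \<Rightarrow> ('p \<Rightarrow> nat \<Rightarrow> bool)
    \<Rightarrow> ('p \<Rightarrow> 'p \<Rightarrow> nat) \<Rightarrow> 'p \<Rightarrow> 'p \<Rightarrow> 'p \<Rightarrow> bool" where
  "prefers d a T x y z \<longleftrightarrow>
     d (a x) (a y) < d (a x) (a z) \<or> (d (a x) (a y) = d (a x) (a z) \<and> T x y < T x z)"

definition profile_instance :: "'p set \<Rightarrow> 'p set \<Rightarrow> nat \<Rightarrow>
    ((nat \<Rightarrow> bool) \<Rightarrow> (nat \<Rightarrow> bool) \<Rightarrow> real) \<Rightarrow> ('p \<Rightarrow> 'p \<Rightarrow> nat) \<Rightarrow> bool" where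
  "profile_instance M W k d T \<longleftrightarrow>
     finite M \<and> finite W \<and> M \<inter> W = {} \<and> card M = card W \<and>
     (d = hamming k \<or> d = whamming k) \<and>
     (\<forall>x \<in> M \<union> W. inj_on (T x) (opp M W x))"

definition is_matching :: "'p set \<Rightarrow> 'p set \<Rightarrow> ('p \<Rightarrow> 'p) \<Rightarrow> bool" where
  "is_matching M W mu \<longleftrightarrow>
     (\<forall>m \<in> M. mu m \<in> W \<and> mu (mu m) = m) \<and> (\<forall>w \<in> W. mu w \<in> M \<and> mu (mu w) = w)"

definition stable_matching :: "'p set \<Rightarrow> 'p set \<Rightarrow> ((nat \<Rightarrow> bool) \<Rightarrow> (nat \<Rightarrow> bool) \<Rightarrow> real)
    \<Rightarrow> ('p \<Rightarrow> nat \<Rightarrow> bool) \<Rightarrow> ('p \<Rightarrow> 'p \<Rightarrow> nat) \<Rightarrow> ('p \<Rightarrow> 'p) \<Rightarrow> bool" where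
  "stable_matching M W d a T mu \<longleftrightarrow> is_matching M W mu \<and>
     \<not> (\<exists>m \<in> M. \<exists>w \<in> W. prefers d a T m w (mu m) \<and> prefers d a T w m (mu w))"

definition stable_partner :: "'p set \<Rightarrow> 'p set \<Rightarrow> ((nat \<Rightarrow> bool) \<Rightarrow> (nat \<Rightarrow> bool) \<Rightarrow> real)
    \<Rightarrow> ('p \<Rightarrow> nat \<Rightarrow> bool) \<Rightarrow> ('p \<Rightarrow> 'p \<Rightarrow> nat) \<Rightarrow> 'p \<Rightarrow> 'p \<Rightarrow> bool" where
  "stable_partner M W d a T x y \<longleftrightarrow> (\<exists>mu. stable_matching M W d a T mu \<and> mu x = y)"

end

theory Submission
  imports Defs "HOL-Library.Product_Lexorder"
begin

text \<open>A stable matching exists by the Gale--Shapley argument, run here as an invariant: a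
maximal set of rejections, each justified by a better current proposer, leaves every man with
a distinct favourite among the women who have not rejected him, and these proposals form a
stable matching.

For uniqueness let \<open>\<mu>\<^sub>1, \<mu>\<^sub>2\<close> be stable and suppose \<open>x\<close> is strictly closer to
\<open>\<mu>\<^sub>1 x\<close> than to \<open>\<mu>\<^sub>2 x\<close>. Stability of \<open>\<mu>\<^sub>2\<close> forces \<open>q = \<mu>\<^sub>1 x\<close> to prefer
\<open>\<mu>\<^sub>2 q\<close> to \<open>x\<close>, and stability of \<open>\<mu>\<^sub>1\<close> then forces \<open>r = \<mu>\<^sub>2 q\<close> to prefer
\<open>\<mu>\<^sub>1 r\<close> to \<open>q\<close>; as \<open>d\<close> is symmetric, \<open>d(r, \<mu>\<^sub>1 r) \<le> d(q, r) \<le> d(x, q)\<close>. Along the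
alternating cycle of \<open>\<mu>\<^sub>2 \<circ> \<mu>\<^sub>1\<close> through \<open>x\<close> the distance to the \<open>\<mu>\<^sub>1\<close>-partner
therefore never increases, and closing the cycle gives \<open>d(x, \<mu>\<^sub>2 x) \<le> d(x, \<mu>\<^sub>1 x)\<close>.
So all stable partners of \<open>x\<close> are equidistant from \<open>x\<close>.\<close>

lemma funpow_inj_on_finite:
  assumes "inj_on f S" "f ` S \<subseteq> S" "finite S" "x \<in> S"
  obtains n where "n > 0" "(f ^^ n) x = x"
proof -
  define g where "g z = (if z \<in> S then f z else z)" for z
  have "inj g"
    using assms(1,2) unfolding g_def inj_on_def inj_def by (auto split: if_splits)
  have g_funpow: "(g ^^ n) x = (f ^^ n) x \<and> (f ^^ n) x \<in> S" for n
    by (induction n) (use assms(2,4) in \<open>auto simp: g_def\<close>)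
  then have "{y. \<exists>n. y = (g ^^ n) x} \<subseteq> S" by auto
  with \<open>inj g\<close> obtain n where "n > 0" "(g ^^ n) x = x"
    using funpow_inj_finite finite_subset assms(3) by metis
  with g_funpow that show thesis by metis
qed

lemma prefers_iff_lex_less:
  "prefers d a T z u v \<longleftrightarrow> (d (a z) (a u), T z u) < (d (a z) (a v), T z v)"
  unfolding prefers_def less_prod_def' by simp

lemma prefers_irrefl: "\<not> prefers d a T z u u"
  by (simp add: prefers_iff_lex_less)

lemma prefers_trans: "prefers d a T z u v \<Longrightarrow> prefers d a T z v w \<Longrightarrow> prefers d a T z u w"
  unfolding prefers_iff_lex_less by (rule less_trans)

lemma prefers_asym: "prefers d a T z u v \<Longrightarrow> \<not> prefers d a T z v u"
  unfolding prefers_iff_lex_less by (rule less_not_sym)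

lemma prefers_imp_le: "prefers d a T z u v \<Longrightarrow> d (a z) (a u) \<le> d (a z) (a v)"
  unfolding prefers_def by auto

lemma prefers_if_less: "d (a z) (a u) < d (a z) (a v) \<Longrightarrow> prefers d a T z u v"
  unfolding prefers_def by simp

lemma prefers_total:
  "inj_on (T z) A \<Longrightarrow> u \<in> A \<Longrightarrow> v \<in> A \<Longrightarrow> u \<noteq> v \<Longrightarrow>
    prefers d a T z u v \<or> prefers d a T z v u"
  unfolding prefers_iff_lex_less inj_on_def by (metis neq_iff prod.inject)

lemma prefers_best_exists:
  assumes "finite A" "A \<noteq> {}" "inj_on (T z) A"
  shows "\<exists>u\<in>A. \<forall>v\<in>A. v \<noteq> u \<longrightarrow> prefers d a T z u v"
proof -
  define u where "u = arg_min_on (\<lambda>v. (d (a z) (a v), T z v)) A"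
  have "u \<in> A" "\<forall>v\<in>A. \<not> prefers d a T z v u"
    using arg_min_if_finite[OF assms(1,2), of "\<lambda>v. (d (a z) (a v), T z v)"]
    unfolding u_def prefers_iff_lex_less by (simp_all only: Bex_def) blast
  then show ?thesis using prefers_total[of T z A, OF assms(3)] by metis
qed

definition matching_of :: "'p set \<Rightarrow> ('p \<Rightarrow> 'p) \<Rightarrow> 'p \<Rightarrow> 'p" where
  "matching_of M f z = (if z \<in> M then f z else inv_into M f z)"

lemma is_matching_matching_of:
  assumes "bij_betw f M W" "M \<inter> W = {}"
  shows "is_matching M W (matching_of M f)"
proof -
  have "f m \<in> W" "f m \<notin> M" if "m \<in> M" for m
    using that assms bij_betwE by blast+
  moreover have "inv_into M f w \<in> M" "w \<notin> M" if "w \<in> W" for w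
    using that assms bij_betwE[OF bij_betw_inv_into[OF assms(1)]] by blast+
  ultimately show ?thesis
    unfolding is_matching_def matching_of_def
    using bij_betw_inv_into_left[OF assms(1)] bij_betw_inv_into_right[OF assms(1)] by simp
qed

locale distance_market =
  fixes M W :: "'p set" and d :: "(nat \<Rightarrow> bool) \<Rightarrow> (nat \<Rightarrow> bool) \<Rightarrow> real"
    and a :: "'p \<Rightarrow> nat \<Rightarrow> bool" and T :: "'p \<Rightarrow> 'p \<Rightarrow> nat"
  assumes finite_M: "finite M" and finite_W: "finite W" and disjoint: "M \<inter> W = {}"
    and card_eq: "card M = card W"
    and tie_break_inj: "z \<in> M \<union> W \<Longrightarrow> inj_on (T z) (opp M W z)"
begin

abbreviation pref where "pref \<equiv> prefers d a T"

lemma opp_M: "z \<in> M \<Longrightarrow> opp M W z = W"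
  unfolding opp_def by simp

lemma opp_W: "z \<in> W \<Longrightarrow> opp M W z = M"
  unfolding opp_def using disjoint by auto

lemma pref_total:
  "z \<in> M \<union> W \<Longrightarrow> u \<in> opp M W z \<Longrightarrow> v \<in> opp M W z \<Longrightarrow> u \<noteq> v \<Longrightarrow> pref z u v \<or> pref z v u"
  using prefers_total tie_break_inj by metis

text \<open>\<open>R\<close> is the set of rejections of the Gale--Shapley algorithm: \<open>(m, w) \<in> R\<close> means that
\<open>w\<close> has rejected \<open>m\<close>, and every man proposes to his favourite woman not yet rejecting him.\<close>

definition proposes :: "('p \<times> 'p) set \<Rightarrow> 'p \<Rightarrow> 'p \<Rightarrow> bool" where
  "proposes R m w \<longleftrightarrow>
     w \<in> W \<and> (m, w) \<notin> R \<and> (\<forall>w'\<in>W. (m, w') \<notin> R \<longrightarrow> w' \<noteq> w \<longrightarrow> pref m w w')"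

definition justified_rejections :: "('p \<times> 'p) set \<Rightarrow> bool" where
  "justified_rejections R \<longleftrightarrow>
     R \<subseteq> M \<times> W \<and> (\<forall>(m, w)\<in>R. \<exists>m'\<in>M. proposes R m' w \<and> pref w m' m)"

lemma proposes_unique:
  assumes "proposes R m w" "proposes R m w'"
  shows "w = w'"
proof (rule ccontr)
  assume "w \<noteq> w'"
  then have "pref m w w'" "pref m w' w" using assms unfolding proposes_def by auto
  then show False using prefers_asym by metis
qed

lemma proposes_exists:
  assumes "m \<in> M" "\<exists>w\<in>W. (m, w) \<notin> R"
  shows "\<exists>w. proposes R m w"
proof -
  let ?A = "{w \<in> W. (m, w) \<notin> R}"
  have "inj_on (T m) W" using tie_break_inj[of m] opp_M[OF assms(1)] assms(1) by simp
  then have "inj_on (T m) ?A" by (rule inj_on_subset) blast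
  moreover have "finite ?A" "?A \<noteq> {}" using finite_W assms(2) by auto
  ultimately obtain w where "w \<in> ?A" "\<forall>w'\<in>?A. w' \<noteq> w \<longrightarrow> pref m w w'"
    using prefers_best_exists[of ?A T m d a] by blast
  then show ?thesis unfolding proposes_def by auto
qed

lemma proposes_insert_other:
  "m' \<noteq> m \<Longrightarrow> proposes (insert (m, w) R) m' w' \<longleftrightarrow> proposes R m' w'"
  unfolding proposes_def by auto

lemma justified_rejections_insert:
  assumes R: "justified_rejections R" and m1: "m1 \<in> M" and m2: "m2 \<in> M" and "m1 \<noteq> m2"
    and p1: "proposes R m1 w" and p2: "proposes R m2 w" and pw: "pref w m1 m2"
  shows "justified_rejections (insert (m2, w) R)"
proof -
  let ?R = "insert (m2, w) R"
  have p1': "proposes ?R m1 w"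
    using proposes_insert_other \<open>m1 \<noteq> m2\<close> p1 by metis
  have old: "\<exists>m'\<in>M. proposes ?R m' w' \<and> pref w' m' m" if "(m, w') \<in> R" for m w'
  proof -
    obtain m' where m': "m' \<in> M" "proposes R m' w'" "pref w' m' m"
      using R \<open>(m, w') \<in> R\<close> unfolding justified_rejections_def by blast
    show ?thesis
    proof (cases "m' = m2")
      case True
      with m' p2 have "w' = w" using proposes_unique by blast
      with True m' have "pref w m1 m" using prefers_trans[OF pw] by simp
      with \<open>w' = w\<close> show ?thesis using p1' m1 by blast
    next
      case False
      with m' show ?thesis using proposes_insert_other by blast
    qed
  qed
  have "w \<in> W" using p1 unfolding proposes_def by simp
  show ?thesis
    unfolding justified_rejections_def
  proof (intro conjI ballI)
    show "?R \<subseteq> M \<times> W" using R m2 \<open>w \<in> W\<close> unfolding justified_rejections_def by blast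
  next
    fix p assume "p \<in> ?R"
    then show "case p of (m, w') \<Rightarrow> \<exists>m'\<in>M. proposes ?R m' w' \<and> pref w' m' m"
      using old p1' m1 pw by (cases p) auto
  qed
qed

lemma finite_justified_rejections: "justified_rejections R \<Longrightarrow> finite R"
  unfolding justified_rejections_def using finite_M finite_W finite_subset by blast

lemma maximal_justified_rejections_exists:
  obtains R where "justified_rejections R" "\<And>R'. justified_rejections R' \<Longrightarrow> card R' \<le> card R"
proof -
  have "justified_rejections {}" unfolding justified_rejections_def by simp
  moreover have "card R < Suc (card (M \<times> W))" if "justified_rejections R" for R
    using that card_mono finite_M finite_W unfolding justified_rejections_def
    by (metis finite_SigmaI less_Suc_eq_le)
  ultimately show thesis using ex_has_greatest_nat[of justified_rejections] that by blast
qed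

context
  fixes R :: "('p \<times> 'p) set"
  assumes justified: "justified_rejections R"
    and maximal: "\<And>R'. justified_rejections R' \<Longrightarrow> card R' \<le> card R"
begin

lemma maximal_proposals_inj:
  assumes "m1 \<in> M" "m2 \<in> M" "proposes R m1 w" "proposes R m2 w"
  shows "m1 = m2"
proof (rule ccontr)
  assume "m1 \<noteq> m2"
  \<comment> \<open>the woman could reject the worse of two proposers, enlarging \<open>R\<close>\<close>
  have no_better: False if "n1 \<in> M" "n2 \<in> M" "n1 \<noteq> n2" "proposes R n1 w" "proposes R n2 w"
    "pref w n1 n2" for n1 n2
  proof -
    have "card (insert (n2, w) R) \<le> card R"
      using maximal justified_rejections_insert[OF justified that] by blast
    moreover have "(n2, w) \<notin> R" using \<open>proposes R n2 w\<close> unfolding proposes_def by simp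
    ultimately show False using finite_justified_rejections[OF justified] by simp
  qed
  have "w \<in> W" using assms(3) unfolding proposes_def by simp
  then have "pref w m1 m2 \<or> pref w m2 m1"
    using pref_total[of w m1 m2] opp_W assms(1,2) \<open>m1 \<noteq> m2\<close> by simp
  then show False
    using no_better[of m1 m2] no_better[of m2 m1] assms \<open>m1 \<noteq> m2\<close> by blast
qed

lemma maximal_proposes_exists:
  assumes "m \<in> M"
  shows "\<exists>w. proposes R m w"
proof (rule ccontr)
  assume none: "\<nexists>w. proposes R m w"
  \<comment> \<open>then every woman has rejected \<open>m\<close> and holds a proposal from one of the other men\<close>
  then have "\<forall>w\<in>W. \<exists>m'\<in>M. proposes R m' w"
    using proposes_exists[OF assms] justified unfolding justified_rejections_def by blast
  then obtain g where g: "\<forall>w\<in>W. g w \<in> M \<and> proposes R (g w) w" by metis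
  have "inj_on g W" using g proposes_unique unfolding inj_on_def by metis
  moreover have "g ` W \<subseteq> M - {m}" using g none by auto
  ultimately have "card W \<le> card (M - {m})"
    using card_inj_on_le finite_M by (metis finite_Diff)
  then show False using card_eq assms finite_M card_Diff1_less by (metis not_le)
qed

lemma maximal_proposals_bij: "\<exists>f. bij_betw f M W \<and> (\<forall>m\<in>M. proposes R m (f m))"
proof -
  obtain f where f: "\<forall>m\<in>M. proposes R m (f m)"
    using maximal_proposes_exists by metis
  have "inj_on f M"
    by (rule inj_onI) (use f maximal_proposals_inj in metis)
  moreover have "f ` M \<subseteq> W" using f unfolding proposes_def by auto
  ultimately have "f ` M = W"
    using card_eq finite_W by (simp add: card_image card_subset_eq)
  with \<open>inj_on f M\<close> f show ?thesis unfolding bij_betw_def by blast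
qed

end

lemma stable_matching_of_proposals:
  assumes R: "justified_rejections R" and f: "bij_betw f M W"
    and proposals: "\<And>m. m \<in> M \<Longrightarrow> proposes R m (f m)"
  shows "stable_matching M W d a T (matching_of M f)"
proof -
  let ?mu = "matching_of M f"
  have False if "m \<in> M" "w \<in> W" "pref m w (?mu m)" "pref w m (?mu w)" for m w
  proof -
    have fm: "proposes R m (f m)" "?mu m = f m"
      using proposals \<open>m \<in> M\<close> unfolding matching_of_def by auto
    have "(m, w) \<in> R"
    proof (rule ccontr)
      assume "(m, w) \<notin> R"
      moreover have "w \<noteq> f m" using that(3) fm(2) prefers_irrefl by metis
      ultimately have "pref m (f m) w" using fm(1) \<open>w \<in> W\<close> unfolding proposes_def by blast
      then show False using that(3) fm(2) prefers_asym by metis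
    qed
    then obtain m' where m': "m' \<in> M" "proposes R m' w" "pref w m' m"
      using R unfolding justified_rejections_def by blast
    then have "f m' = w" using proposals proposes_unique by metis
    moreover have "w \<notin> M" using \<open>w \<in> W\<close> disjoint by blast
    ultimately have "?mu w = m'"
      unfolding matching_of_def using bij_betw_inv_into_left[OF f m'(1)] by simp
    then show False using that(4) m'(3) prefers_asym by metis
  qed
  then show ?thesis
    unfolding stable_matching_def using is_matching_matching_of[OF f disjoint] by blast
qed

theorem stable_matching_exists: "\<exists>mu. stable_matching M W d a T mu"
proof -
  obtain R where "justified_rejections R" "\<And>R'. justified_rejections R' \<Longrightarrow> card R' \<le> card R"
    using maximal_justified_rejections_exists by blast
  then obtain f where "bij_betw f M W" "\<forall>m\<in>M. proposes R m (f m)"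
    using maximal_proposals_bij by blast
  then show ?thesis using stable_matching_of_proposals \<open>justified_rejections R\<close> by blast
qed

lemma matching_partner:
  assumes "is_matching M W mu" "z \<in> M \<union> W"
  shows "mu z \<in> opp M W z" "mu (mu z) = z" "mu z \<in> M \<union> W"
  using assms disjoint unfolding is_matching_def opp_def by auto

lemma matching_comp_inj_on:
  assumes "is_matching M W mu1" "is_matching M W mu2"
  shows "inj_on (mu2 \<circ> mu1) (M \<union> W)" "(mu2 \<circ> mu1) ` (M \<union> W) \<subseteq> M \<union> W"
proof -
  have inj: "inj_on mu (M \<union> W)" if "is_matching M W mu" for mu
    by (rule inj_on_inverseI[where g = mu]) (rule matching_partner(2)[OF that])
  have into: "mu ` (M \<union> W) \<subseteq> M \<union> W" if "is_matching M W mu" for mu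
    using matching_partner(3)[OF that] by blast
  show "inj_on (mu2 \<circ> mu1) (M \<union> W)"
    using comp_inj_on[OF inj[OF assms(1)] inj_on_subset[OF inj[OF assms(2)] into[OF assms(1)]]] .
  show "(mu2 \<circ> mu1) ` (M \<union> W) \<subseteq> M \<union> W"
    using into[OF assms(1)] into[OF assms(2)] by auto
qed

lemma stable_no_blocking_pair:
  assumes "stable_matching M W d a T mu" "p \<in> M \<union> W" "q \<in> opp M W p"
    and "pref p q (mu p)" "pref q p (mu q)"
  shows False
proof -
  have no_block: "\<not> (pref m w (mu m) \<and> pref w m (mu w))" if "m \<in> M" "w \<in> W" for m w
    using assms(1) that unfolding stable_matching_def by blast
  show False
  proof (cases "p \<in> M")
    case True
    then have "q \<in> W" using assms(3) opp_M by simp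
    with True show False using no_block assms(4,5) by blast
  next
    case False
    then have "p \<in> W" "q \<in> M" using assms(2,3) opp_W by auto
    then show False using no_block assms(4,5) by blast
  qed
qed

lemma stable_partner_prefers_other:
  assumes mu1: "is_matching M W mu1" and mu2: "stable_matching M W d a T mu2"
    and p: "p \<in> M \<union> W" and pref_p: "pref p (mu1 p) (mu2 p)"
  shows "pref (mu1 p) (mu2 (mu1 p)) p"
proof -
  let ?q = "mu1 p"
  have mu2_matching: "is_matching M W mu2" using mu2 unfolding stable_matching_def by simp
  have q: "?q \<in> opp M W p" "?q \<in> M \<union> W" "p \<in> opp M W ?q"
    using matching_partner[OF mu1 p] matching_partner(1)[OF mu1, of ?q] by auto
  have "mu2 ?q \<noteq> p"
  proof
    assume "mu2 ?q = p"
    then have "mu2 p = ?q" using matching_partner(2)[OF mu2_matching q(2)] by simp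
    then show False using pref_p prefers_irrefl by metis
  qed
  moreover have "\<not> pref ?q p (mu2 ?q)" using stable_no_blocking_pair[OF mu2 p q(1) pref_p] by blast
  ultimately show ?thesis
    using pref_total[OF q(2) matching_partner(1)[OF mu2_matching q(2)] q(3)] by blast
qed

end

locale symmetric_distance_market = distance_market +
  assumes d_commute: "d u v = d v u"
begin

lemma alternating_step:
  assumes mu1: "stable_matching M W d a T mu1" and mu2: "stable_matching M W d a T mu2"
    and p: "p \<in> M \<union> W" and pref_p: "pref p (mu1 p) (mu2 p)"
  defines "r \<equiv> mu2 (mu1 p)"
  shows "r \<in> M \<union> W" "pref r (mu1 r) (mu2 r)" "d (a r) (a (mu1 r)) \<le> d (a p) (a (mu1 p))"
proof -
  let ?q = "mu1 p"
  have m1: "is_matching M W mu1" and m2: "is_matching M W mu2"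
    using mu1 mu2 unfolding stable_matching_def by simp_all
  have q: "?q \<in> M \<union> W" "mu1 ?q = p" using matching_partner[OF m1 p] by simp_all
  have r: "r \<in> M \<union> W" "mu2 r = ?q" using matching_partner[OF m2 q(1)] r_def by simp_all
  have pref_q: "pref ?q r p" using stable_partner_prefers_other[OF m1 mu2 p pref_p] r_def by simp
  then have "pref ?q (mu2 ?q) (mu1 ?q)" using q(2) r_def by simp
  from stable_partner_prefers_other[OF m2 mu1 q(1) this]
  have pref_r: "pref r (mu1 r) ?q" using r_def by simp
  have "d (a r) (a (mu1 r)) \<le> d (a r) (a ?q)" using prefers_imp_le[OF pref_r] .
  also have "\<dots> = d (a ?q) (a r)" by (rule d_commute)
  also have "\<dots> \<le> d (a ?q) (a p)" using prefers_imp_le[OF pref_q] .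
  also have "\<dots> = d (a p) (a ?q)" by (rule d_commute)
  finally show "d (a r) (a (mu1 r)) \<le> d (a p) (a (mu1 p))" .
  show "r \<in> M \<union> W" by (fact r(1))
  show "pref r (mu1 r) (mu2 r)" using pref_r r(2) by simp
qed

lemma stable_partner_not_closer:
  assumes mu1: "stable_matching M W d a T mu1" and mu2: "stable_matching M W d a T mu2"
    and x: "x \<in> M \<union> W"
  shows "\<not> d (a x) (a (mu1 x)) < d (a x) (a (mu2 x))"
proof
  assume closer: "d (a x) (a (mu1 x)) < d (a x) (a (mu2 x))"
  define f where "f = mu2 \<circ> mu1"
  have f_apply: "f z = mu2 (mu1 z)" for z by (simp add: f_def)
  have m1: "is_matching M W mu1" and m2: "is_matching M W mu2"
    using mu1 mu2 unfolding stable_matching_def by simp_all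
  have orbit: "(f ^^ i) x \<in> M \<union> W \<and> pref ((f ^^ i) x) (mu1 ((f ^^ i) x)) (mu2 ((f ^^ i) x))
      \<and> d (a ((f ^^ i) x)) (a (mu1 ((f ^^ i) x))) \<le> d (a x) (a (mu1 x))" for i
  proof (induction i)
    case 0
    show ?case using x prefers_if_less[of d a x "mu1 x" "mu2 x" T, OF closer] by simp
  next
    case (Suc i)
    let ?p = "(f ^^ i) x"
    have IH: "?p \<in> M \<union> W" "pref ?p (mu1 ?p) (mu2 ?p)"
      "d (a ?p) (a (mu1 ?p)) \<le> d (a x) (a (mu1 x))"
      using Suc.IH by simp_all
    have "(f ^^ Suc i) x = mu2 (mu1 ?p)" by (simp add: f_apply)
    then show ?case using alternating_step[OF mu1 mu2 IH(1,2)] IH(3) by auto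
  qed
  obtain n where "n > 0" "(f ^^ n) x = x"
    using funpow_inj_on_finite[OF matching_comp_inj_on[OF m1 m2]] finite_M finite_W x f_def
    by blast
  then obtain p where p: "p = (f ^^ (n - 1)) x" and "mu2 (mu1 p) = x"
    by (metis Suc_diff_1 f_apply funpow.simps(2) comp_apply)
  with orbit[of "n - 1"] have p_props: "p \<in> M \<union> W" "pref p (mu1 p) (mu2 p)"
      "d (a p) (a (mu1 p)) \<le> d (a x) (a (mu1 x))"
    by simp_all
  have "mu1 p = mu2 x"
    using \<open>mu2 (mu1 p) = x\<close> matching_partner(2,3)[OF m2] matching_partner(3)[OF m1 p_props(1)]
    by metis
  then have "pref (mu2 x) x p"
    using stable_partner_prefers_other[OF m1 mu2 p_props(1,2)] \<open>mu2 (mu1 p) = x\<close> by simp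
  then have "d (a x) (a (mu2 x)) \<le> d (a p) (a (mu1 p))"
    using prefers_imp_le d_commute \<open>mu1 p = mu2 x\<close> by metis
  with p_props(3) closer show False by simp
qed

theorem stable_partners_equidistant:
  assumes "stable_matching M W d a T mu1" "stable_matching M W d a T mu2" "x \<in> M \<union> W"
  shows "d (a x) (a (mu1 x)) = d (a x) (a (mu2 x))"
  using stable_partner_not_closer[OF assms] stable_partner_not_closer[OF assms(2,1,3)] by simp

end

lemma hamming_commute: "hamming k u v = hamming k v u"
  unfolding hamming_def by (metis (no_types, lifting))

lemma whamming_commute: "whamming k u v = whamming k v u"
  unfolding whamming_def by (metis (no_types, lifting))

lemma symmetric_distance_market_if_profile_instance:
  assumes "profile_instance M W k d T"
  shows "symmetric_distance_market M W d T"
  using assms hamming_commute whamming_commute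
  unfolding profile_instance_def symmetric_distance_market_def distance_market_def
    symmetric_distance_market_axioms_def
  by auto

theorem lemmaA4:
  fixes M W :: "'p set" and k :: nat and d :: "(nat \<Rightarrow> bool) \<Rightarrow> (nat \<Rightarrow> bool) \<Rightarrow> real"
    and a :: "'p \<Rightarrow> nat \<Rightarrow> bool" and T :: "'p \<Rightarrow> 'p \<Rightarrow> nat" and x :: 'p
  assumes "profile_instance M W k d T"
    and "x \<in> M \<union> W"
    and "inj_on (\<lambda>y. d (a x) (a y)) (opp M W x)"
  shows "\<exists>!y. stable_partner M W d a T x y"
proof -
  interpret symmetric_distance_market M W d a T
    using symmetric_distance_market_if_profile_instance[OF assms(1)] .
  obtain mu where "stable_matching M W d a T mu" using stable_matching_exists by blast
  then have "stable_partner M W d a T x (mu x)" unfolding stable_partner_def by blast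
  moreover have "mu1 x = mu2 x"
    if "stable_matching M W d a T mu1" "stable_matching M W d a T mu2" for mu1 mu2
  proof -
    have "mu1 x \<in> opp M W x" "mu2 x \<in> opp M W x"
      using that matching_partner(1)[OF _ assms(2)] unfolding stable_matching_def by blast+
    with assms(3) show ?thesis
      using stable_partners_equidistant[OF that assms(2)] unfolding inj_on_def by blast
  qed
  ultimately show ?thesis unfolding stable_partner_def by blast
qed

end
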